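(* Let $G$ be a finite perfect graph. For $v\in V(G)$ let $c(v)$ be the largest size of a clique of $G$ containing $v$, and let $i(v)$ be the largest size of an independent set of $G$ containing $v$. Then \[ \sum_{v\in V(G)}\frac{1}{c(v)\,i(v)}\le 1. \]
   Context: A graph $G$ is perfect if for every induced subgraph its chromatic number equals its clique number. *)

theory Defs
  imports Complex_Main
begin

text \<open>A finite simple graph is given by a finite vertex set V and a symmetric,
irreflexive adjacency relation E (only its restriction to V matters).\<close>

definition simple_graph :: "'a set \<Rightarrow> ('a \<Rightarrow> 'a \<Rightarrow> bool) \<Rightarrow> bool" where
  "simple_graph V E \<longleftrightarrow> (\<forall>x\<in>V. \<forall>y\<in>V. E x y \<longrightarrow> E y x) \<and> (\<forall>x\<in>V. \<not> E x x)"

definition is_clique :: "('a \<Rightarrow> 'a \<Rightarrow> bool) \<Rightarrow> 'a set \<Rightarrow> bool" where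
  "is_clique E K \<longleftrightarrow> (\<forall>x\<in>K. \<forall>y\<in>K. x \<noteq> y \<longrightarrow> E x y)"

definition is_indep :: "('a \<Rightarrow> 'a \<Rightarrow> bool) \<Rightarrow> 'a set \<Rightarrow> bool" where
  "is_indep E I \<longleftrightarrow> (\<forall>x\<in>I. \<forall>y\<in>I. \<not> E x y)"

definition clique_number :: "'a set \<Rightarrow> ('a \<Rightarrow> 'a \<Rightarrow> bool) \<Rightarrow> nat" where
  "clique_number S E = Max {card K | K. K \<subseteq> S \<and> is_clique E K}"

definition proper_colouring :: "'a set \<Rightarrow> ('a \<Rightarrow> 'a \<Rightarrow> bool) \<Rightarrow> ('a \<Rightarrow> nat) \<Rightarrow> nat \<Rightarrow> bool" where
  "proper_colouring S E f k \<longleftrightarrow> (\<forall>x\<in>S. f x < k) \<and> (\<forall>x\<in>S. \<forall>y\<in>S. E x y \<longrightarrow> f x \<noteq> f y)"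

definition chromatic_number :: "'a set \<Rightarrow> ('a \<Rightarrow> 'a \<Rightarrow> bool) \<Rightarrow> nat" where
  "chromatic_number S E = (LEAST k. \<exists>f. proper_colouring S E f k)"

definition perfect_graph :: "'a set \<Rightarrow> ('a \<Rightarrow> 'a \<Rightarrow> bool) \<Rightarrow> bool" where
  "perfect_graph V E \<longleftrightarrow>
     (\<forall>S. S \<subseteq> V \<longrightarrow> chromatic_number S E = clique_number S E)"

definition max_clique_at :: "'a set \<Rightarrow> ('a \<Rightarrow> 'a \<Rightarrow> bool) \<Rightarrow> 'a \<Rightarrow> nat" where
  "max_clique_at V E v = Max {card K | K. K \<subseteq> V \<and> is_clique E K \<and> v \<in> K}"

definition max_indep_at :: "'a set \<Rightarrow> ('a \<Rightarrow> 'a \<Rightarrow> bool) \<Rightarrow> 'a \<Rightarrow> nat" where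
  "max_indep_at V E v = Max {card I | I. I \<subseteq> V \<and> is_indep E I \<and> v \<in> I}"

end

theory Submission
  imports Defs
begin

(* Blow up G by replacing each vertex v with a clique of w(v) = N / c(v) copies, where N is the
   product of all c(v).  Lovasz's replication argument shows that the blow-up still satisfies
   chi <= omega, and a clique of the blow-up lies over a clique U of G, so it has at most
   sum_{u in U} N / c(u) <= N vertices.  Hence the blow-up has an N-colouring.  A colour class
   consists of copies of pairwise distinct vertices forming an independent set I of G, so it
   contributes sum_{u in I} 1 / i(u) <= 1 to sum_v w(v) / i(v) = N * sum_v 1 / (c(v) i(v)).
   Summing over the N colour classes gives the bound. *)

lemma proper_colouring_card:
  assumes "finite S" "\<forall>a\<in>S. \<not> R a a"
  shows "\<exists>f. proper_colouring S R f (card S)"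
proof -
  obtain f where f: "bij_betw f S {..<card S}"
    using ex_bij_betw_finite_nat[OF assms(1)] by (auto simp: atLeast0LessThan)
  then have "proper_colouring S R f (card S)"
    using assms(2) unfolding proper_colouring_def bij_betw_def inj_on_def by blast
  then show ?thesis by blast
qed

lemma proper_colouring_chromatic_number:
  assumes "finite S" "\<forall>a\<in>S. \<not> R a a"
  obtains f where "proper_colouring S R f (chromatic_number S R)"
proof -
  have "\<exists>f. proper_colouring S R f (chromatic_number S R)"
    using proper_colouring_card[of S R, OF assms] unfolding chromatic_number_def by (rule LeastI)
  then show ?thesis using that by blast
qed

lemma chromatic_number_le:
  "proper_colouring S R f k \<Longrightarrow> chromatic_number S R \<le> k"
  unfolding chromatic_number_def by (rule Least_le) blast

lemma proper_colouring_mono: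
  "proper_colouring S R f k \<Longrightarrow> k \<le> k' \<Longrightarrow> proper_colouring S R f k'"
  unfolding proper_colouring_def by auto

lemma finite_clique_sizes:
  "finite S \<Longrightarrow> finite {card K | K. K \<subseteq> S \<and> is_clique R K}"
  by (rule finite_subset[of _ "card ` Pow S"]) auto

lemma card_le_clique_number:
  assumes "finite S" "K \<subseteq> S" "is_clique R K"
  shows "card K \<le> clique_number S R"
  unfolding clique_number_def using finite_clique_sizes[OF assms(1)] assms by (intro Max_ge) auto

lemma clique_number_attained:
  assumes "finite S"
  obtains K where "K \<subseteq> S" "is_clique R K" "card K = clique_number S R"
proof -
  let ?sizes = "{card K | K. K \<subseteq> S \<and> is_clique R K}"
  have "card ({} :: 'a set) \<in> ?sizes"
    by (rule CollectI, rule exI[of _ "{}"]) (simp add: is_clique_def)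
  then have "?sizes \<noteq> {}"
    by (metis empty_iff)
  then have "clique_number S R \<in> ?sizes"
    unfolding clique_number_def by (rule Max_in[OF finite_clique_sizes[OF assms]])
  then obtain K where "clique_number S R = card K" "K \<subseteq> S" "is_clique R K"
    by (auto simp only: mem_Collect_eq)
  then show ?thesis using that by simp
qed

lemma clique_number_mono:
  assumes "finite S" "T \<subseteq> S"
  shows "clique_number T R \<le> clique_number S R"
proof -
  obtain K where K: "K \<subseteq> T" "is_clique R K" "card K = clique_number T R"
    using clique_number_attained[OF finite_subset[OF assms(2,1)]] .
  have "card K \<le> clique_number S R"
    using K(1,2) assms by (intro card_le_clique_number) auto
  then show ?thesis using K(3) by simp
qed

lemma inj_on_colouring_clique:
  "proper_colouring S R f k \<Longrightarrow> K \<subseteq> S \<Longrightarrow> is_clique R K \<Longrightarrow> inj_on f K"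
  unfolding proper_colouring_def is_clique_def inj_on_def by blast

lemma colouring_clique_image_subset:
  "proper_colouring S R f k \<Longrightarrow> K \<subseteq> S \<Longrightarrow> f ` K \<subseteq> {..<k}"
  unfolding proper_colouring_def by auto

lemma colouring_maximum_clique_image:
  assumes f: "proper_colouring S R f k" and K: "K \<subseteq> S" "is_clique R K" "card K = k"
  shows "f ` K = {..<k}"
proof -
  have "card (f ` K) = card {..<k}"
    using card_image[OF inj_on_colouring_clique[OF f K(1,2)]] K(3) by simp
  then show ?thesis
    using colouring_clique_image_subset[OF f K(1)] by (metis card_subset_eq finite_lessThan)
qed

lemma is_indep_colour_class:
  "proper_colouring S R f k \<Longrightarrow> is_indep R {z\<in>S. f z = j}"
  unfolding proper_colouring_def is_indep_def by blast

lemma chromatic_number_Un_indep_le: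
  assumes "finite S" "\<forall>a\<in>S. \<not> R a a" "is_indep R I"
  shows "chromatic_number (S \<union> I) R \<le> Suc (chromatic_number S R)"
proof -
  let ?k = "chromatic_number S R"
  obtain f where f: "proper_colouring S R f ?k"
    using proper_colouring_chromatic_number[of S R] assms by blast
  have "proper_colouring (S \<union> I) R (\<lambda>z. if z \<in> S then f z else ?k) (Suc ?k)"
    using f assms(3) unfolding proper_colouring_def is_indep_def by (auto simp: less_Suc_eq)
  then show ?thesis by (rule chromatic_number_le)
qed

lemma is_clique_insert_twin:
  assumes K: "is_clique R K" "x \<in> K"
    and sym: "\<forall>a\<in>insert x' K. \<forall>b\<in>insert x' K. R a b \<longrightarrow> R b a"
    and "R x x'" and twin: "\<forall>z\<in>K - {x, x'}. R x z \<longrightarrow> R x' z"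
  shows "is_clique R (insert x' K)"
proof -
  have "R x' b" if "b \<in> K" "b \<noteq> x'" for b
  proof (cases "b = x")
    case True
    then show ?thesis using sym K(2) \<open>R x x'\<close> by blast
  next
    case False
    then have "R x b" using K that unfolding is_clique_def by auto
    then show ?thesis using twin that False by auto
  qed
  then show ?thesis
    using K(1) sym unfolding is_clique_def by (metis insert_iff)
qed

(* Colour S - {x'} optimally.  Either x lies in a maximum clique
   of S - {x'}, which x' enlarges, so one new colour for x' suffices; or deleting the rest of
   the colour class of x lowers the clique number, and that class together with x' becomes a
   single new colour class. *)
lemma chromatic_number_le_clique_number_twins:
  assumes fin: "finite S" and sym: "\<forall>a\<in>S. \<forall>b\<in>S. R a b \<longrightarrow> R b a"
    and irr: "\<forall>a\<in>S. \<not> R a a"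
    and x: "x \<in> S" "x' \<in> S" "x \<noteq> x'" "R x x'"
    and twin: "\<forall>z\<in>S - {x, x'}. R x' z \<longleftrightarrow> R x z"
    and IH: "\<And>T. T \<subset> S \<Longrightarrow> chromatic_number T R \<le> clique_number T R"
  shows "chromatic_number S R \<le> clique_number S R"
proof -
  define S0 where "S0 = S - {x'}"
  define w0 where "w0 = clique_number S0 R"
  have S0: "S0 \<subset> S" "finite S0" "x \<in> S0" "S = S0 \<union> {x'}"
    using fin x unfolding S0_def by auto
  have irr0: "\<forall>a\<in>S0. \<not> R a a" using irr S0(1) by auto
  obtain f0 where "proper_colouring S0 R f0 (chromatic_number S0 R)"
    using proper_colouring_chromatic_number[of S0 R] S0(2) irr0 by blast
  then have f0: "proper_colouring S0 R f0 w0"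
    using IH[OF S0(1)] unfolding w0_def by (rule proper_colouring_mono)
  show ?thesis
  proof (cases "\<exists>K\<subseteq>S0. is_clique R K \<and> x \<in> K \<and> card K = w0")
    case True
    then obtain K where K: "K \<subseteq> S0" "is_clique R K" "x \<in> K" "card K = w0" by blast
    have "is_clique R (insert x' K)"
      using K(1) S0_def sym twin x by (intro is_clique_insert_twin[OF K(2,3)]) auto
    moreover have "card (insert x' K) = Suc w0"
    proof -
      have "x' \<notin> K" using K(1) unfolding S0_def by blast
      then show ?thesis using card_insert_disjoint[OF finite_subset[OF K(1) S0(2)]] K(4) by simp
    qed
    ultimately have "Suc w0 \<le> clique_number S R"
      using K(1) S0_def x fin by (metis card_le_clique_number insert_subset Diff_subset subset_trans)
    moreover have "chromatic_number S R \<le> Suc (chromatic_number S0 R)"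
      using S0(4) chromatic_number_Un_indep_le[of S0 R "{x'}"] S0(2) irr0 irr x(2)
      unfolding is_indep_def by simp
    ultimately show ?thesis using IH[OF S0(1)] unfolding w0_def by linarith
  next
    case False
    define A where "A = {z\<in>S0. f0 z = f0 x \<and> z \<noteq> x}"
    define T where "T = S0 - A"
    have T: "T \<subset> S" "finite T" "x \<in> T" using S0 unfolding T_def A_def by auto
    have "clique_number T R \<noteq> w0"
    proof
      assume "clique_number T R = w0"
      then obtain K where K: "K \<subseteq> T" "is_clique R K" "card K = w0"
        using clique_number_attained[OF T(2)] by metis
      have "K \<subseteq> S0" using K(1) unfolding T_def by blast
      then have "f0 ` K = {..<w0}" by (rule colouring_maximum_clique_image[OF f0 _ K(2,3)])
      moreover have "f0 x < w0" using f0 S0(3) unfolding proper_colouring_def by blast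
      ultimately have "f0 x \<in> f0 ` K" by blast
      then obtain z where "z \<in> K" "f0 z = f0 x" by (metis imageE)
      then have "x \<in> K" using K(1) unfolding T_def A_def by blast
      then show False using False K T_def by blast
    qed
    then have "clique_number T R < w0"
      using clique_number_mono[OF S0(2), of T R] unfolding T_def w0_def by auto
    moreover have "chromatic_number T R \<le> clique_number T R"
      using IH[OF T(1)] .
    moreover have "is_indep R (insert x' A)"
    proof -
      have A: "A \<subseteq> S - {x, x'}" unfolding A_def S0_def by auto
      have "insert x A \<subseteq> {z\<in>S0. f0 z = f0 x}" using S0(3) unfolding A_def by blast
      then have A_indep: "\<not> R a b" if "a \<in> insert x A" "b \<in> insert x A" for a b
        using that is_indep_colour_class[OF f0] unfolding is_indep_def by blast
      have "\<not> R x' z" if "z \<in> A" for z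
        using that A twin A_indep by blast
      then show ?thesis
        using A A_indep sym irr x(2) unfolding is_indep_def by blast
    qed
    moreover have "S = T \<union> insert x' A" and "\<forall>a\<in>T. \<not> R a a"
      using S0(3,4) irr0 unfolding T_def A_def by auto
    ultimately have "chromatic_number S R \<le> w0"
      using chromatic_number_Un_indep_le[of T R "insert x' A"] T(2) by auto
    moreover have "w0 \<le> clique_number S R"
      using clique_number_mono[OF fin] S0(1) unfolding w0_def by auto
    ultimately show ?thesis by linarith
  qed
qed

lemma chromatic_number_le_hom:
  assumes "finite (h ` S)" "\<forall>u\<in>h ` S. \<not> R u u"
    and hom: "\<forall>a\<in>S. \<forall>b\<in>S. R' a b \<longrightarrow> R (h a) (h b)"
  shows "chromatic_number S R' \<le> chromatic_number (h ` S) R"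
proof -
  obtain g where "proper_colouring (h ` S) R g (chromatic_number (h ` S) R)"
    using proper_colouring_chromatic_number[of "h ` S" R] assms(1,2) by blast
  then have "proper_colouring S R' (g \<circ> h) (chromatic_number (h ` S) R)"
    using hom unfolding proper_colouring_def by auto
  then show ?thesis by (rule chromatic_number_le)
qed

lemma clique_number_le_inj_hom:
  assumes "finite S" "inj_on h S" and reflects: "\<forall>a\<in>S. \<forall>b\<in>S. R (h a) (h b) \<longrightarrow> R' a b"
  shows "clique_number (h ` S) R \<le> clique_number S R'"
proof -
  obtain K where K: "K \<subseteq> h ` S" "is_clique R K" "card K = clique_number (h ` S) R"
    using clique_number_attained[of "h ` S"] assms(1) by blast
  define K' where "K' = S \<inter> h -` K"
  have "h ` K' = K" using K(1) unfolding K'_def by auto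
  then have "card K' = card K"
    using card_image inj_on_subset[OF assms(2)] unfolding K'_def by (metis Int_lower1)
  moreover have "is_clique R' K'"
    using K(2) reflects inj_on_contraD[OF assms(2)] unfolding K'_def is_clique_def by auto
  ultimately show ?thesis
    using card_le_clique_number[OF assms(1), of K' R'] K(3) unfolding K'_def by auto
qed

(* (v, i) is the i-th copy of v; the copies of a vertex form a clique. *)
definition blow_up :: "('a \<Rightarrow> 'a \<Rightarrow> bool) \<Rightarrow> 'a \<times> nat \<Rightarrow> 'a \<times> nat \<Rightarrow> bool" where
  "blow_up E p q \<longleftrightarrow> (fst p = fst q \<and> snd p \<noteq> snd q) \<or> E (fst p) (fst q)"

lemma chromatic_number_blow_up_le_clique_number:
  assumes "simple_graph V E" and "perfect_graph V E"
  shows "finite S \<Longrightarrow> fst ` S \<subseteq> V \<Longrightarrow>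
    chromatic_number S (blow_up E) \<le> clique_number S (blow_up E)"
proof (induction "card S" arbitrary: S rule: less_induct)
  case less
  have sym: "\<forall>a\<in>S. \<forall>b\<in>S. blow_up E a b \<longrightarrow> blow_up E b a"
    and irr: "\<forall>a\<in>S. \<not> blow_up E a a"
    using less.prems(2) assms(1) unfolding simple_graph_def blow_up_def
    by (fastforce simp: image_subset_iff)+
  show ?case
  proof (cases "inj_on fst S")
    case True
    have "chromatic_number S (blow_up E) \<le> chromatic_number (fst ` S) E"
      using less.prems assms(1) True
      by (intro chromatic_number_le_hom) (auto simp: simple_graph_def blow_up_def inj_on_def)
    also have "\<dots> = clique_number (fst ` S) E"
      using assms(2) less.prems(2) unfolding perfect_graph_def by blast
    also have "\<dots> \<le> clique_number S (blow_up E)"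
      using less.prems(1) True by (intro clique_number_le_inj_hom) (auto simp: blow_up_def)
    finally show ?thesis .
  next
    case False
    then obtain p q where pq: "p \<in> S" "q \<in> S" "fst p = fst q" "p \<noteq> q"
      unfolding inj_on_def by blast
    show ?thesis
    proof (rule chromatic_number_le_clique_number_twins[OF less.prems(1) sym irr pq(1,2,4)])
      show "blow_up E p q" "\<forall>z\<in>S - {p, q}. blow_up E q z \<longleftrightarrow> blow_up E p z"
        using pq unfolding blow_up_def by (auto simp: prod_eq_iff)
    next
      fix T assume "T \<subset> S"
      then show "chromatic_number T (blow_up E) \<le> clique_number T (blow_up E)"
        using less.hyps less.prems psubset_card_mono[OF less.prems(1)]
        by (meson finite_subset image_mono psubsetE subset_trans)
    qed
  qed
qed

lemma card_le_max_clique_at: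
  assumes "finite V" "K \<subseteq> V" "is_clique E K" "v \<in> K"
  shows "card K \<le> max_clique_at V E v"
  unfolding max_clique_at_def
  by (rule Max_ge[OF finite_subset[of _ "card ` Pow V"]]) (use assms in auto)

lemma card_le_max_indep_at:
  assumes "finite V" "I \<subseteq> V" "is_indep E I" "v \<in> I"
  shows "card I \<le> max_indep_at V E v"
  unfolding max_indep_at_def
  by (rule Max_ge[OF finite_subset[of _ "card ` Pow V"]]) (use assms in auto)

lemma sum_inverse_le_one:
  assumes "finite U" "\<forall>u\<in>U. card U \<le> m u"
  shows "(\<Sum>u\<in>U. 1 / real (m u)) \<le> 1"
proof (cases "U = {}")
  case False
  then have "0 < card U" using assms(1) by auto
  then have "(\<Sum>u\<in>U. 1 / real (m u)) \<le> (\<Sum>u\<in>U. 1 / real (card U))"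
    using assms(2) by (intro sum_mono divide_left_mono) auto
  also have "\<dots> = 1" using \<open>0 < card U\<close> by simp
  finally show ?thesis .
qed simp

lemma sum_inverse_max_clique_at_le_one:
  assumes "finite V" "U \<subseteq> V" "is_clique E U"
  shows "(\<Sum>u\<in>U. 1 / real (max_clique_at V E u)) \<le> 1"
  using card_le_max_clique_at[OF assms] finite_subset[OF assms(2,1)]
  by (intro sum_inverse_le_one) auto

lemma sum_inverse_max_indep_at_le_one:
  assumes "finite V" "I \<subseteq> V" "is_indep E I"
  shows "(\<Sum>u\<in>I. 1 / real (max_indep_at V E u)) \<le> 1"
  using card_le_max_indep_at[OF assms] finite_subset[OF assms(2,1)]
  by (intro sum_inverse_le_one) auto

lemma sum_clique_weights_le:
  assumes "finite V" "U \<subseteq> V" "is_clique E U"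
    and w: "\<And>v. v \<in> V \<Longrightarrow> real (w v) = real N / real (max_clique_at V E v)"
  shows "(\<Sum>u\<in>U. w u) \<le> N"
proof -
  have "real (\<Sum>u\<in>U. w u) = real N * (\<Sum>u\<in>U. 1 / real (max_clique_at V E u))"
    using w assms(2) by (simp add: sum_distrib_left subset_iff)
  also have "\<dots> \<le> real N"
    using sum_inverse_max_clique_at_le_one[OF assms(1-3)] by (simp add: mult_left_le)
  finally show ?thesis by linarith
qed

lemma clique_number_blow_up_le:
  assumes "finite V" and bound: "\<forall>U\<subseteq>V. is_clique E U \<longrightarrow> (\<Sum>u\<in>U. w u) \<le> N"
  shows "clique_number (SIGMA v:V. {..<w v}) (blow_up E) \<le> N"
proof -
  obtain K where K: "K \<subseteq> (SIGMA v:V. {..<w v})" "is_clique (blow_up E) K"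
    "card K = clique_number (SIGMA v:V. {..<w v}) (blow_up E)"
    using clique_number_attained[of "SIGMA v:V. {..<w v}"] assms(1) by blast
  have "fst ` K \<subseteq> V" using K(1) by auto
  then have U: "fst ` K \<subseteq> V" "finite (fst ` K)" using finite_subset assms(1) by auto
  have "is_clique E (fst ` K)"
    using K(2) unfolding is_clique_def blow_up_def by fastforce
  then have "(\<Sum>u\<in>fst ` K. w u) \<le> N" using bound U(1) by blast
  moreover have "card K \<le> card (SIGMA u:fst ` K. {..<w u})"
    using K(1) U(2) by (intro card_mono) force+
  ultimately show ?thesis using K(3) U(2) by simp
qed

lemma is_indep_blow_up:
  assumes "is_indep (blow_up E) P"
  shows "inj_on fst P" "is_indep E (fst ` P)"
proof -
  show "inj_on fst P"
    using assms unfolding is_indep_def blow_up_def inj_on_def by (metis prod_eq_iff)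
  show "is_indep E (fst ` P)"
    using assms unfolding is_indep_def blow_up_def by blast
qed

lemma sum_blow_up_le_chromatic_number:
  assumes "finite V" "\<forall>v\<in>V. \<not> E v v"
  shows "(\<Sum>v\<in>V. real (w v) / real (max_indep_at V E v))
    \<le> chromatic_number (SIGMA v:V. {..<w v}) (blow_up E)"
proof -
  define B where "B = (SIGMA v:V. {..<w v})"
  define k where "k = chromatic_number B (blow_up E)"
  define g where "g p = 1 / real (max_indep_at V E (fst p))" for p :: "'a \<times> nat"
  have B: "finite B" "fst ` B \<subseteq> V" using assms(1) unfolding B_def by auto
  obtain f where f: "proper_colouring B (blow_up E) f k"
    using proper_colouring_chromatic_number[of B "blow_up E"] B assms(2)
    unfolding k_def blow_up_def by fastforce
  have colour_class: "(\<Sum>p\<in>{p\<in>B. f p = j}. g p) \<le> 1" for j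
  proof -
    let ?P = "{p\<in>B. f p = j}"
    note indep = is_indep_blow_up[OF is_indep_colour_class[OF f]]
    have PV: "fst ` ?P \<subseteq> V" using B(2) by auto
    have "(\<Sum>p\<in>?P. g p) = (\<Sum>u\<in>fst ` ?P. 1 / real (max_indep_at V E u))"
      unfolding g_def by (simp add: sum.reindex[OF indep(1)])
    also have "\<dots> \<le> 1"
      by (rule sum_inverse_max_indep_at_le_one[OF assms(1) PV indep(2)])
    finally show ?thesis .
  qed
  have "(\<Sum>v\<in>V. real (w v) / real (max_indep_at V E v)) = (\<Sum>v\<in>V. \<Sum>i<w v. g (v, i))"
    unfolding g_def by (simp add: divide_inverse)
  also have "\<dots> = (\<Sum>p\<in>B. g p)"
    unfolding B_def using assms(1) by (subst sum.Sigma) (auto simp: case_prod_beta)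
  also have "\<dots> = (\<Sum>j<k. \<Sum>p\<in>{p\<in>B. f p = j}. g p)"
    using f B(1) unfolding proper_colouring_def by (intro sum.group[symmetric]) auto
  also have "\<dots> \<le> real k"
    using sum_mono[of "{..<k}", OF colour_class] by simp
  finally show ?thesis unfolding k_def B_def .
qed

theorem theorem9:
  fixes V :: "'a set" and E :: "'a \<Rightarrow> 'a \<Rightarrow> bool"
  assumes "finite V" and "simple_graph V E" and "perfect_graph V E"
  shows "(\<Sum>v\<in>V. 1 / (real (max_clique_at V E v) * real (max_indep_at V E v))) \<le> 1"
proof -
  let ?c = "max_clique_at V E" and ?i = "max_indep_at V E"
  define N where "N = (\<Prod>v\<in>V. ?c v)"
  define w where "w v = N div ?c v" for v
  define B where "B = (SIGMA v:V. {..<w v})"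
  have "0 < ?c v" if "v \<in> V" for v
    using card_le_max_clique_at[OF assms(1), of "{v}" E v] that by (simp add: is_clique_def)
  then have "0 < N" unfolding N_def by (simp add: prod_pos)
  have w: "real (w v) = real N / real (?c v)" if "v \<in> V" for v
    unfolding w_def N_def using assms(1) that by (intro real_of_nat_div dvd_prod_eqI) auto
  have "clique_number B (blow_up E) \<le> N"
    unfolding B_def using sum_clique_weights_le[OF assms(1) _ _ w]
    by (intro clique_number_blow_up_le[OF assms(1)]) blast
  moreover have "chromatic_number B (blow_up E) \<le> clique_number B (blow_up E)"
    unfolding B_def using assms(1)
    by (intro chromatic_number_blow_up_le_clique_number[OF assms(2,3)]) auto
  moreover have "real N * (\<Sum>v\<in>V. 1 / (real (?c v) * real (?i v)))
      = (\<Sum>v\<in>V. real (w v) / real (?i v))"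
    using w by (simp add: sum_distrib_left)
  moreover have "\<dots> \<le> chromatic_number B (blow_up E)"
    using assms(1,2) unfolding B_def simple_graph_def by (intro sum_blow_up_le_chromatic_number) auto
  ultimately have "real N * (\<Sum>v\<in>V. 1 / (real (?c v) * real (?i v))) \<le> real N * 1"
    by linarith
  then show ?thesis using \<open>0 < N\<close> by simp
qed

end
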